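(* Let $x$ be a stable g-matching with $x\ne x^{\max}$, let $w\in W$, and let $(c,a)$ be a legal $w$-pair under $x$. Let $d\in (U_F^+(x)\cap E_w)\setminus\{a\}$ be interesting for $w$ under $z:=x_w+\mathbf 1^a-\mathbf 1^c$. Then $(c,d)$ is a legal $w$-pair under $x$ and $x_w+\mathbf 1^d-\mathbf 1^c\succ_w z$.
   Context: Let $G=(V,E)$ be a finite bipartite graph with color classes $W$ and $F$; the edge joining $w\in W$ and $f\in F$ is written $wf$. Let $b\in\mathbb Z_+^E$ be capacities. For $v\in V$, $E_v$ is the set of edges at $v$, $\mathcal B_v=\{z\in\mathbb Z_+^{E_v}: z\le b|_{E_v}\}$, $\mathbf 1^e$ the unit vector of $e$, $|z|=\sum_e|z(e)|$, $\wedge,\vee$ componentwise min/max. Each $v$ has a choice function $C_v:\mathcal B_v\to\mathcal B_v$ with $C_v(z)\le z$ and, for all $z,z'$: (A1) $z\ge z'\ge C_v(z)\Rightarrow C_v(z')=C_v(z)$; (A2) $z\ge z'\Rightarrow C_v(z)\wedge z'\le C_v(z')$; (A3) $z\ge z'\Rightarrow|C_v(z)|\ge|C_v(z')|$. $z$ is acceptable if $C_v(z)=z$; for distinct acceptable $z,z'$, $z'\prec_v z$ (i.e. $z\succ_v z'$) iff $C_v(z\vee z')=z$. $x_v$ = restriction of $x$ to $E_v$. A g-matching is $x\in\mathbb Z_+^E$, $x\le b$, each $x_v$ acceptable; $x\prec_F y$ (distinct) iff $x_f\preceq_f y_f$ for all $f\in F$. $e\in E_v$ is interesting for $v$ under acceptable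 $z$ if some $z'\in\mathcal B_v$ has $z'(e)>z(e)$, $z'(e')=z(e')$ for $e'\neq e$, $C_v(z')(e)>z(e)$; $e=wf$ is interesting for $v\in\{w,f\}$ under a g-matching $x$ if so under $x_v$, and blocks $x$ if interesting for both endpoints; stable g-matchings (no blocking edge) form a finite lattice under $\prec_F$ with maximum $x^{\max}$. For stable $x$: $U_F^+(x)$ = edges $wf$ interesting for $f$ under $x$; $U_F^-(x)$ = edges $wf$ with $x(wf)>0$ not interesting for $f$ under $x$. For $w\in W$, a legal $w$-pair under $x$ is $(c,a)$ with $c\in U_F^-(x)\cap E_w$, $a\in U_F^+(x)\cap E_w$ and $C_w(x_w+\mathbf 1^a-\mathbf 1^c)=x_w+\mathbf 1^a-\mathbf 1^c$. *)

theory Defs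
  imports Main
begin

(* Vertices have type 'v; an edge wf (w in W, f in F) is the pair (w,f).
   Vectors in Z_+^E (or Z_+^{E_v}) are functions 'v*'v => nat that vanish
   outside E (resp. E_v). *)

type_synonym 'v vec = "'v \<times> 'v \<Rightarrow> nat"
type_synonym 'v choice = "'v \<Rightarrow> 'v vec \<Rightarrow> 'v vec"

definition Ev :: "('v \<times> 'v) set \<Rightarrow> 'v \<Rightarrow> ('v \<times> 'v) set" where
  "Ev E v = {e \<in> E. fst e = v \<or> snd e = v}"

definition Bv :: "('v \<times> 'v) set \<Rightarrow> 'v vec \<Rightarrow> 'v \<Rightarrow> 'v vec set" where
  "Bv E b v = {z. (\<forall>e. e \<notin> Ev E v \<longrightarrow> z e = 0) \<and> (\<forall>e \<in> Ev E v. z e \<le> b e)}"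

definition vsize :: "('v \<times> 'v) set \<Rightarrow> 'v \<Rightarrow> 'v vec \<Rightarrow> nat" where
  "vsize E v z = (\<Sum>e \<in> Ev E v. z e)"

definition unitv :: "'v \<times> 'v \<Rightarrow> 'v vec" where
  "unitv e = (\<lambda>e'. if e' = e then 1 else 0)"

definition restr :: "('v \<times> 'v) set \<Rightarrow> 'v vec \<Rightarrow> 'v \<Rightarrow> 'v vec" where
  "restr E x v = (\<lambda>e. if e \<in> Ev E v then x e else 0)"

definition choice_fun :: "('v \<times> 'v) set \<Rightarrow> 'v vec \<Rightarrow> 'v \<Rightarrow> ('v vec \<Rightarrow> 'v vec) \<Rightarrow> bool" where
  "choice_fun E b v Cv \<longleftrightarrow>
     (\<forall>z \<in> Bv E b v. Cv z \<in> Bv E b v \<and> Cv z \<le> z) \<and>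
     (\<forall>z \<in> Bv E b v. \<forall>z' \<in> Bv E b v. z \<ge> z' \<and> z' \<ge> Cv z \<longrightarrow> Cv z' = Cv z) \<and>
     (\<forall>z \<in> Bv E b v. \<forall>z' \<in> Bv E b v. z \<ge> z' \<longrightarrow> inf (Cv z) z' \<le> Cv z') \<and>
     (\<forall>z \<in> Bv E b v. \<forall>z' \<in> Bv E b v. z \<ge> z' \<longrightarrow> vsize E v (Cv z) \<ge> vsize E v (Cv z'))"

definition gm_setting :: "'v set \<Rightarrow> 'v set \<Rightarrow> ('v \<times> 'v) set \<Rightarrow> 'v vec \<Rightarrow> 'v choice \<Rightarrow> bool" where
  "gm_setting W F E b C \<longleftrightarrow>
     finite W \<and> finite F \<and> W \<inter> F = {} \<and> E \<subseteq> W \<times> F \<and>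
     (\<forall>e. e \<notin> E \<longrightarrow> b e = 0) \<and>
     (\<forall>v \<in> W \<union> F. choice_fun E b v (C v))"

definition acceptable :: "('v \<times> 'v) set \<Rightarrow> 'v vec \<Rightarrow> 'v choice \<Rightarrow> 'v \<Rightarrow> 'v vec \<Rightarrow> bool" where
  "acceptable E b C v z \<longleftrightarrow> z \<in> Bv E b v \<and> C v z = z"

definition prefers :: "('v \<times> 'v) set \<Rightarrow> 'v vec \<Rightarrow> 'v choice \<Rightarrow> 'v \<Rightarrow> 'v vec \<Rightarrow> 'v vec \<Rightarrow> bool" where
  "prefers E b C v z z' \<longleftrightarrow>
     acceptable E b C v z \<and> acceptable E b C v z' \<and> z \<noteq> z' \<and> C v (sup z z') = z"

definition gmatching :: "'v set \<Rightarrow> 'v set \<Rightarrow> ('v \<times> 'v) set \<Rightarrow> 'v vec \<Rightarrow> 'v choice \<Rightarrow> 'v vec \<Rightarrow> bool" where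
  "gmatching W F E b C x \<longleftrightarrow>
     (\<forall>e. e \<notin> E \<longrightarrow> x e = 0) \<and> x \<le> b \<and>
     (\<forall>v \<in> W \<union> F. acceptable E b C v (restr E x v))"

definition F_le :: "'v set \<Rightarrow> ('v \<times> 'v) set \<Rightarrow> 'v vec \<Rightarrow> 'v choice \<Rightarrow> 'v vec \<Rightarrow> 'v vec \<Rightarrow> bool" where
  "F_le F E b C x y \<longleftrightarrow> x = y \<or>
     (\<forall>f \<in> F. restr E x f = restr E y f \<or> prefers E b C f (restr E y f) (restr E x f))"

definition interesting :: "('v \<times> 'v) set \<Rightarrow> 'v vec \<Rightarrow> 'v choice \<Rightarrow> 'v \<Rightarrow> 'v \<times> 'v \<Rightarrow> 'v vec \<Rightarrow> bool" where
  "interesting E b C v e z \<longleftrightarrow> e \<in> Ev E v \<and>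
     (\<exists>z' \<in> Bv E b v. z' e > z e \<and> (\<forall>e'. e' \<noteq> e \<longrightarrow> z' e' = z e') \<and> C v z' e > z e)"

definition blocks :: "('v \<times> 'v) set \<Rightarrow> 'v vec \<Rightarrow> 'v choice \<Rightarrow> 'v vec \<Rightarrow> 'v \<times> 'v \<Rightarrow> bool" where
  "blocks E b C x e \<longleftrightarrow> e \<in> E \<and>
     interesting E b C (fst e) e (restr E x (fst e)) \<and>
     interesting E b C (snd e) e (restr E x (snd e))"

definition stable :: "'v set \<Rightarrow> 'v set \<Rightarrow> ('v \<times> 'v) set \<Rightarrow> 'v vec \<Rightarrow> 'v choice \<Rightarrow> 'v vec \<Rightarrow> bool" where
  "stable W F E b C x \<longleftrightarrow> gmatching W F E b C x \<and> (\<forall>e \<in> E. \<not> blocks E b C x e)"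

definition is_xmax :: "'v set \<Rightarrow> 'v set \<Rightarrow> ('v \<times> 'v) set \<Rightarrow> 'v vec \<Rightarrow> 'v choice \<Rightarrow> 'v vec \<Rightarrow> bool" where
  "is_xmax W F E b C y \<longleftrightarrow> stable W F E b C y \<and>
     (\<forall>x. stable W F E b C x \<longrightarrow> F_le F E b C x y)"

definition UFplus :: "('v \<times> 'v) set \<Rightarrow> 'v vec \<Rightarrow> 'v choice \<Rightarrow> 'v vec \<Rightarrow> ('v \<times> 'v) set" where
  "UFplus E b C x = {e \<in> E. interesting E b C (snd e) e (restr E x (snd e))}"

definition UFminus :: "('v \<times> 'v) set \<Rightarrow> 'v vec \<Rightarrow> 'v choice \<Rightarrow> 'v vec \<Rightarrow> ('v \<times> 'v) set" where
  "UFminus E b C x = {e \<in> E. x e > 0 \<and> \<not> interesting E b C (snd e) e (restr E x (snd e))}"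

definition swapv :: "('v \<times> 'v) set \<Rightarrow> 'v vec \<Rightarrow> 'v \<Rightarrow> 'v \<times> 'v \<Rightarrow> 'v \<times> 'v \<Rightarrow> 'v vec" where
  "swapv E x w a c = (\<lambda>e. restr E x w e + unitv a e - unitv c e)"

definition legal_pair :: "('v \<times> 'v) set \<Rightarrow> 'v vec \<Rightarrow> 'v choice \<Rightarrow> 'v vec \<Rightarrow> 'v \<Rightarrow> 'v \<times> 'v \<Rightarrow> 'v \<times> 'v \<Rightarrow> bool" where
  "legal_pair E b C x w c a \<longleftrightarrow>
     c \<in> UFminus E b C x \<inter> Ev E w \<and> a \<in> UFplus E b C x \<inter> Ev E w \<and>
     swapv E x w a c \<in> Bv E b w \<and> C w (swapv E x w a c) = swapv E x w a c"

end

theory Submission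
  imports Defs "HOL-Library.Function_Algebras"
begin

(* Write x for x_w, z = x + 1^a - 1^c, z' = x + 1^d - 1^c and y = x + 1^a + 1^d - 1^c,
   so that y = sup z z'.  Stability of x makes a and d uninteresting for w, hence
   C_w(x + 1^a) = C_w(x + 1^d) = x, and substitutability (A2) together with consistency
   (A1) gives C_w(x + 1^a + 1^d) = x.  Applying (A2) and (A3) to y below x + 1^a + 1^d
   shows that C_w(y) contains min(x, y) and has size at most |x|; since d is interesting
   under z = y - 1^d, C_w(y) also keeps all of d.  So C_w(y) dominates z', which has the
   same size as x, and therefore C_w(y) = z'.  This says both that z' is acceptable and
   that z' is preferred to z. *)

(* Edges are pairs, but no argument looks inside them: splitting quantifiers over edges
   only stops the simplifier from instantiating them. *)
declare split_paired_All [simp del] split_paired_Ex [simp del]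

lemma choice_fun_in_Bv:
  "choice_fun E b v Cv \<Longrightarrow> z \<in> Bv E b v \<Longrightarrow> Cv z \<in> Bv E b v"
  unfolding choice_fun_def by blast

lemma choice_fun_le:
  "choice_fun E b v Cv \<Longrightarrow> z \<in> Bv E b v \<Longrightarrow> Cv z \<le> z"
  unfolding choice_fun_def by blast

lemma choice_fun_consistent:
  "choice_fun E b v Cv \<Longrightarrow> z \<in> Bv E b v \<Longrightarrow> z' \<in> Bv E b v \<Longrightarrow> Cv z \<le> z' \<Longrightarrow> z' \<le> z
    \<Longrightarrow> Cv z' = Cv z"
  unfolding choice_fun_def by blast

lemma choice_fun_substitutable:
  "choice_fun E b v Cv \<Longrightarrow> z \<in> Bv E b v \<Longrightarrow> z' \<in> Bv E b v \<Longrightarrow> z' \<le> z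
    \<Longrightarrow> inf (Cv z) z' \<le> Cv z'"
  unfolding choice_fun_def by blast

lemma choice_fun_size_mono:
  "choice_fun E b v Cv \<Longrightarrow> z \<in> Bv E b v \<Longrightarrow> z' \<in> Bv E b v \<Longrightarrow> z' \<le> z
    \<Longrightarrow> vsize E v (Cv z') \<le> vsize E v (Cv z)"
  unfolding choice_fun_def by blast

lemma Bv_downward_closed:
  assumes g_B: "g \<in> Bv E b v" and "f \<le> g"
  shows "f \<in> Bv E b v"
  unfolding Bv_def mem_Collect_eq
proof (intro conjI allI ballI impI)
  fix e
  have "f e \<le> g e"
    using \<open>f \<le> g\<close> by (rule le_funD)
  then show "e \<notin> Ev E v \<Longrightarrow> f e = 0" and "e \<in> Ev E v \<Longrightarrow> f e \<le> b e"
    using g_B unfolding Bv_def mem_Collect_eq by (metis le_zero_eq, meson order_trans)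
qed

lemma Bv_support:
  "z \<in> Bv E b v \<Longrightarrow> z e \<noteq> 0 \<Longrightarrow> e \<in> Ev E v"
  unfolding Bv_def mem_Collect_eq by metis

lemma sup_in_Bv:
  "f \<in> Bv E b v \<Longrightarrow> g \<in> Bv E b v \<Longrightarrow> sup f g \<in> Bv E b v"
  unfolding Bv_def by auto

lemma vsize_add_unitv:
  assumes "finite (Ev E v)" and "e \<in> Ev E v"
  shows "vsize E v (f + unitv e) = vsize E v f + 1"
  using assms by (simp add: vsize_def sum.distrib unitv_def)

lemma Bv_eq_if_le_vsize_le:
  assumes fin: "finite (Ev E v)" and g_B: "g \<in> Bv E b v"
    and le: "f \<le> g" and size: "vsize E v g \<le> vsize E v f"
  shows "f = g"
proof (rule ccontr)
  assume "f \<noteq> g"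
  then obtain e where "f e \<noteq> g e"
    by (meson ext)
  then have lt: "f e < g e"
    using le_funD[OF le, of e] by simp
  then have "e \<in> Ev E v"
    using Bv_support[OF g_B] by simp
  then have "vsize E v f < vsize E v g"
    unfolding vsize_def using lt le_funD[OF le]
    by (intro sum_strict_mono_ex1[OF fin]) auto
  then show False
    using size by simp
qed

lemma interesting_imp_choice_add_unitv:
  assumes cf: "choice_fun E b v (C v)" and int: "interesting E b C v e z"
  shows "z + unitv e \<in> Bv E b v" and "z e < C v (z + unitv e) e"
proof -
  obtain z' where z'_B: "z' \<in> Bv E b v" and "z e < z' e" and "\<forall>e'. e' \<noteq> e \<longrightarrow> z' e' = z e'"
    and C_z': "z e < C v z' e"
    using int unfolding interesting_def by blast
  then have le: "z + unitv e \<le> z'"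
    by (auto simp: le_fun_def unitv_def)
  show B: "z + unitv e \<in> Bv E b v"
    using Bv_downward_closed[OF z'_B le] .
  have "inf (C v z') (z + unitv e) e \<le> C v (z + unitv e) e"
    using choice_fun_substitutable[OF cf z'_B B le] by (rule le_funD)
  then show "z e < C v (z + unitv e) e"
    using C_z' by (simp add: unitv_def inf_min)
qed

lemma choice_eq_if_le:
  assumes cf: "choice_fun E b v (C v)" and acc: "acceptable E b C v x"
    and "y \<in> Bv E b v" and "x \<le> y" and "C v y \<le> x"
  shows "C v y = x"
  using choice_fun_consistent[OF cf assms(3) _ assms(5,4)] acc
  unfolding acceptable_def by simp

lemma choice_add_unitv_if_not_interesting:
  assumes cf: "choice_fun E b v (C v)" and acc: "acceptable E b C v x"
    and B: "x + unitv e \<in> Bv E b v" and not_int: "\<not> interesting E b C v e x"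
  shows "C v (x + unitv e) = x"
proof (rule choice_eq_if_le[OF cf acc B])
  show "x \<le> x + unitv e"
    by (simp add: le_fun_def)
  have "e \<in> Ev E v"
    using Bv_support[OF B] by (simp add: unitv_def)
  have "C v (x + unitv e) e \<le> x e"
  proof (rule ccontr)
    assume "\<not> C v (x + unitv e) e \<le> x e"
    then have "interesting E b C v e x"
      unfolding interesting_def using \<open>e \<in> Ev E v\<close> B
      by (intro conjI bexI[of _ "x + unitv e"]) (auto simp: unitv_def)
    with not_int show False ..
  qed
  moreover have "C v (x + unitv e) \<le> x + unitv e"
    using choice_fun_le[OF cf B] .
  ultimately show "C v (x + unitv e) \<le> x"
    by (auto simp: le_fun_def unitv_def split: if_splits)
qed

lemma vsize_swap:
  assumes "finite (Ev E v)" and "c \<in> Ev E v" and "d \<in> Ev E v" and "0 < x c"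
  shows "vsize E v (x + unitv d - unitv c) = vsize E v x"
proof -
  have "(x + unitv d - unitv c) + unitv c = x + unitv d"
    using \<open>0 < x c\<close> by (auto simp: fun_eq_iff unitv_def)
  then show ?thesis
    using vsize_add_unitv[OF assms(1)] assms(2,3) by (metis add_right_cancel)
qed

lemma choice_add_two_unitv_if_not_interesting:
  assumes cf: "choice_fun E b v (C v)" and acc: "acceptable E b C v x" and "a \<noteq> d"
    and Y_B: "x + unitv a + unitv d \<in> Bv E b v"
    and a_not_int: "\<not> interesting E b C v a x" and d_not_int: "\<not> interesting E b C v d x"
  shows "C v (x + unitv a + unitv d) = x"
proof -
  let ?Y = "x + unitv a + unitv d"
  have xa_B: "x + unitv a \<in> Bv E b v" and xd_B: "x + unitv d \<in> Bv E b v"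
    by (auto intro: Bv_downward_closed[OF Y_B] simp: le_fun_def)
  have "inf (C v ?Y) (x + unitv a) \<le> x"
    using choice_fun_substitutable[OF cf Y_B xa_B]
      choice_add_unitv_if_not_interesting[OF cf acc xa_B a_not_int] by (simp add: le_fun_def)
  moreover have "inf (C v ?Y) (x + unitv d) \<le> x"
    using choice_fun_substitutable[OF cf Y_B xd_B]
      choice_add_unitv_if_not_interesting[OF cf acc xd_B d_not_int] by (simp add: le_fun_def)
  ultimately have "C v ?Y \<le> x"
    using choice_fun_le[OF cf Y_B] \<open>a \<noteq> d\<close>
    by (intro le_funI) (fastforce simp: le_fun_def unitv_def inf_min split: if_splits)
  then show ?thesis
    by (rule choice_eq_if_le[OF cf acc Y_B, rotated]) (simp add: le_fun_def)
qed

lemma choice_exchange: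
  assumes cf: "choice_fun E b v (C v)" and fin: "finite (Ev E v)"
    and acc: "acceptable E b C v x" and x_c: "0 < x c"
    and ne: "a \<noteq> d" "c \<noteq> a" "c \<noteq> d"
    and a_not_int: "\<not> interesting E b C v a x" and d_not_int: "\<not> interesting E b C v d x"
    and z_B: "x + unitv a - unitv c \<in> Bv E b v"
    and d_int: "interesting E b C v d (x + unitv a - unitv c)"
  shows "C v (x + unitv a + unitv d - unitv c) = x + unitv d - unitv c"
proof -
  define y where "y = x + unitv a + unitv d - unitv c"
  define z' where "z' = x + unitv d - unitv c"
  define Y where "Y = x + unitv a + unitv d"
  have x_B: "x \<in> Bv E b v"
    using acc unfolding acceptable_def by blast
  have "y = (x + unitv a - unitv c) + unitv d"
    using x_c ne by (auto simp: fun_eq_iff y_def unitv_def)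
  then have y_B: "y \<in> Bv E b v" and C_y_d: "x d < C v y d"
    using interesting_imp_choice_add_unitv[OF cf d_int] ne by (simp_all add: unitv_def)
  have xa_B: "x + unitv a \<in> Bv E b v"
    by (rule Bv_downward_closed[OF sup_in_Bv[OF x_B z_B]]) (use ne in \<open>auto simp: le_fun_def unitv_def\<close>)
  have Y_B: "Y \<in> Bv E b v"
    by (rule Bv_downward_closed[OF sup_in_Bv[OF xa_B y_B]])
      (use ne in \<open>auto simp: Y_def y_def le_fun_def unitv_def\<close>)
  have y_Y: "y \<le> Y"
    by (simp add: y_def Y_def le_fun_def)
  have C_Y: "C v Y = x"
    using choice_add_two_unitv_if_not_interesting[OF cf acc ne(1) Y_B[unfolded Y_def]
        a_not_int d_not_int]
    unfolding Y_def .
  have inf_le: "inf x y e \<le> C v y e" for e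
    using choice_fun_substitutable[OF cf Y_B y_B y_Y] C_Y by (simp add: le_fun_def)
  have z'_C_y: "z' \<le> C v y"
  proof (rule le_funI)
    fix e
    show "z' e \<le> C v y e"
    proof (cases "e = d")
      case True
      with C_y_d ne show ?thesis
        by (simp add: z'_def unitv_def)
    next
      case False
      then have "z' e \<le> inf x y e"
        using ne by (simp add: z'_def y_def unitv_def)
      then show ?thesis
        using inf_le by (rule order_trans)
    qed
  qed
  have c_Ev: "c \<in> Ev E v"
    using Bv_support[OF x_B] x_c by simp
  have d_Ev: "d \<in> Ev E v"
    using d_int unfolding interesting_def by blast
  have "vsize E v (C v y) \<le> vsize E v z'"
    using choice_fun_size_mono[OF cf Y_B y_B y_Y] C_Y vsize_swap[where x = x, OF fin c_Ev d_Ev x_c]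
    by (simp add: z'_def)
  then have "z' = C v y"
    using Bv_eq_if_le_vsize_le[OF fin choice_fun_in_Bv[OF cf y_B] z'_C_y] by simp
  then show ?thesis
    unfolding y_def z'_def by simp
qed

lemma prefers_exchange:
  assumes cf: "choice_fun E b v (C v)" and fin: "finite (Ev E v)"
    and acc: "acceptable E b C v x" and x_c: "0 < x c"
    and ne: "a \<noteq> d" "c \<noteq> a" "c \<noteq> d"
    and a_not_int: "\<not> interesting E b C v a x" and d_not_int: "\<not> interesting E b C v d x"
    and z_acc: "acceptable E b C v (x + unitv a - unitv c)"
    and d_int: "interesting E b C v d (x + unitv a - unitv c)"
  shows "prefers E b C v (x + unitv d - unitv c) (x + unitv a - unitv c)"
proof -
  define z where "z = x + unitv a - unitv c"
  define z' where "z' = x + unitv d - unitv c"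
  have y_eq: "sup z' z = z + unitv d"
    using x_c ne by (auto simp: fun_eq_iff z_def z'_def unitv_def sup_max)
  have y_B: "sup z' z \<in> Bv E b v"
    unfolding y_eq using interesting_imp_choice_add_unitv(1)[OF cf d_int] by (simp add: z_def)
  have C_y: "C v (sup z' z) = z'"
  proof -
    have "sup z' z = x + unitv a + unitv d - unitv c"
      using x_c ne by (auto simp: fun_eq_iff z_def z'_def unitv_def sup_max)
    then show ?thesis
      using choice_exchange[OF cf fin acc x_c ne a_not_int d_not_int _ d_int] z_acc
      unfolding z'_def acceptable_def by simp
  qed
  have "z' \<in> Bv E b v"
    using Bv_downward_closed[OF y_B sup_ge1] .
  moreover have "C v z' = z'"
    using choice_fun_consistent[OF cf y_B \<open>z' \<in> Bv E b v\<close>] C_y by simp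
  moreover have "z' \<noteq> z"
    using ne by (auto simp: fun_eq_iff z_def z'_def unitv_def)
  ultimately show ?thesis
    using z_acc C_y unfolding prefers_def acceptable_def z_def z'_def by simp
qed

lemma gm_setting_finite_Ev:
  assumes "gm_setting W F E b C"
  shows "finite (Ev E v)"
proof -
  have "finite E"
    using assms finite_subset unfolding gm_setting_def by blast
  then show ?thesis
    unfolding Ev_def by simp
qed

lemma gm_setting_Ev_fst:
  assumes "gm_setting W F E b C" and "w \<in> W" and "e \<in> Ev E w"
  shows "fst e = w"
proof -
  from \<open>e \<in> Ev E w\<close> have "e \<in> E" and "fst e = w \<or> snd e = w"
    unfolding Ev_def by auto
  moreover have "snd e \<in> F"
    using \<open>e \<in> E\<close> assms(1) unfolding gm_setting_def by auto
  ultimately show ?thesis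
    using assms(1,2) unfolding gm_setting_def by auto
qed

lemma stable_acceptable_restr:
  "stable W F E b C x \<Longrightarrow> v \<in> W \<union> F \<Longrightarrow> acceptable E b C v (restr E x v)"
  unfolding stable_def gmatching_def by blast

lemma stable_UFplus_not_interesting:
  assumes "gm_setting W F E b C" and "stable W F E b C x" and "w \<in> W"
    and "e \<in> UFplus E b C x \<inter> Ev E w"
  shows "\<not> interesting E b C w e (restr E x w)"
proof -
  have "fst e = w"
    using gm_setting_Ev_fst[OF assms(1,3)] assms(4) by blast
  then show ?thesis
    using assms(2,4) unfolding stable_def blocks_def UFplus_def by auto
qed

lemma UFminus_UFplus_disjoint: "UFminus E b C x \<inter> UFplus E b C x = {}"
  unfolding UFminus_def UFplus_def by blast

lemma swapv_eq: "swapv E x w a c = restr E x w + unitv a - unitv c"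
  by (simp add: fun_eq_iff swapv_def)

theorem lemma3p3:
  assumes setting: "gm_setting W F E b C"
    and stab: "stable W F E b C x"
    and xmax: "is_xmax W F E b C xm"
    and ne: "x \<noteq> xm"
    and wW: "w \<in> W"
    and legal: "legal_pair E b C x w c a"
    and d_plus: "d \<in> (UFplus E b C x \<inter> Ev E w) - {a}"
    and d_int: "interesting E b C w d (swapv E x w a c)"
  shows "legal_pair E b C x w c d \<and>
         prefers E b C w (swapv E x w d c) (swapv E x w a c)"
proof -
  have cf: "choice_fun E b w (C w)"
    using setting wW unfolding gm_setting_def by blast
  from legal have c: "c \<in> UFminus E b C x \<inter> Ev E w" and a: "a \<in> UFplus E b C x \<inter> Ev E w"
    and z_acc: "acceptable E b C w (restr E x w + unitv a - unitv c)"
    unfolding legal_pair_def acceptable_def swapv_eq by auto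
  have "c \<noteq> a" "c \<noteq> d"
    using c a d_plus UFminus_UFplus_disjoint by blast+
  moreover have "0 < restr E x w c"
    using c by (simp add: UFminus_def restr_def)
  ultimately have "prefers E b C w (swapv E x w d c) (swapv E x w a c)"
    unfolding swapv_eq using d_plus d_int[unfolded swapv_eq]
    by (intro prefers_exchange[OF cf gm_setting_finite_Ev[OF setting]
          stable_acceptable_restr[OF stab] _ _ _ _
          stable_UFplus_not_interesting[OF setting stab wW a]
          stable_UFplus_not_interesting[OF setting stab wW] z_acc]) (use wW in auto)
  then show ?thesis
    using c d_plus unfolding legal_pair_def prefers_def acceptable_def by blast
qed

end
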